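(* Let $m$ be a positive integer. If $D$ is a quaternary extremal Hermitian self-dual code of length $6m$, then $B_{2i}\equiv 0 \pmod 9$ for every $i=m+1,m+2,\ldots,3m$, where $B_{j}$ denotes the number of codewords of weight $j$ in $D$.
   Context: Let $\mathbb{F}_4=\{0,1,\omega,\omega^2\}$ with $\omega^2=\omega+1$. A quaternary code of length $n$ is a linear subspace of $\mathbb{F}_4^n$; it is Hermitian self-dual if it equals its dual with respect to $\langle x,y\rangle_H=\sum_k x_k y_k^2$. The weight of a vector is the number of its nonzero coordinates. A quaternary Hermitian self-dual code of length $n$ is extremal if its minimum (nonzero) weight equals $2\lfloor n/6\rfloor+2$; for length $6m$ this is $2m+2$. *)

theory Defs
  imports Main
begin

datatype f4 = F0 | F1 | Fw | Fw2

fun f4_add :: "f4 \<Rightarrow> f4 \<Rightarrow> f4" where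
  "f4_add F0 y = y"
| "f4_add x F0 = x"
| "f4_add F1 F1 = F0" | "f4_add F1 Fw = Fw2" | "f4_add F1 Fw2 = Fw"
| "f4_add Fw F1 = Fw2" | "f4_add Fw Fw = F0" | "f4_add Fw Fw2 = F1"
| "f4_add Fw2 F1 = Fw" | "f4_add Fw2 Fw = F1" | "f4_add Fw2 Fw2 = F0"

fun f4_mult :: "f4 \<Rightarrow> f4 \<Rightarrow> f4" where
  "f4_mult F0 y = F0"
| "f4_mult x F0 = F0"
| "f4_mult F1 y = y"
| "f4_mult x F1 = x"
| "f4_mult Fw Fw = Fw2" | "f4_mult Fw Fw2 = F1"
| "f4_mult Fw2 Fw = F1" | "f4_mult Fw2 Fw2 = Fw"

fun f4_inv :: "f4 \<Rightarrow> f4" where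
  "f4_inv F0 = F0" | "f4_inv F1 = F1" | "f4_inv Fw = Fw2" | "f4_inv Fw2 = Fw"

instantiation f4 :: field
begin
definition zero_f4 :: f4 where "zero_f4 = F0"
definition one_f4 :: f4 where "one_f4 = F1"
definition plus_f4 :: "f4 \<Rightarrow> f4 \<Rightarrow> f4" where "plus_f4 = f4_add"
definition times_f4 :: "f4 \<Rightarrow> f4 \<Rightarrow> f4" where "times_f4 = f4_mult"
definition uminus_f4 :: "f4 \<Rightarrow> f4" where "uminus_f4 = (\<lambda>x. x)"
definition minus_f4 :: "f4 \<Rightarrow> f4 \<Rightarrow> f4" where "minus_f4 = f4_add"
definition inverse_f4 :: "f4 \<Rightarrow> f4" where "inverse_f4 = f4_inv"
definition divide_f4 :: "f4 \<Rightarrow> f4 \<Rightarrow> f4" where "divide_f4 = (\<lambda>x y. f4_mult x (f4_inv y))"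
instance
  apply standard
  apply (unfold zero_f4_def one_f4_def plus_f4_def times_f4_def uminus_f4_def minus_f4_def
       inverse_f4_def divide_f4_def)
  subgoal for a b c by (cases a; cases b; cases c) auto
  subgoal for a b by (cases a; cases b) auto
  subgoal for a by (cases a) auto
  subgoal for a b c by (cases a; cases b; cases c) auto
  subgoal for a b by (cases a; cases b) auto
  subgoal for a by (cases a) auto
  subgoal for a by (cases a) auto
  subgoal for a b by (cases a; cases b) auto
  subgoal for a b c by (cases a; cases b; cases c) auto
  subgoal by simp
  subgoal for a by (cases a) auto
  subgoal for a b by (cases a; cases b) auto
  subgoal by simp
  done
end

definition vecs :: "nat \<Rightarrow> (nat \<Rightarrow> f4) set" where
  "vecs n = {x. \<forall>k. n \<le> k \<longrightarrow> x k = 0}"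

definition is_code :: "nat \<Rightarrow> (nat \<Rightarrow> f4) set \<Rightarrow> bool" where
  "is_code n C \<longleftrightarrow> C \<subseteq> vecs n \<and> (\<lambda>_. 0) \<in> C
     \<and> (\<forall>x\<in>C. \<forall>y\<in>C. (\<lambda>k. x k + y k) \<in> C)
     \<and> (\<forall>a. \<forall>x\<in>C. (\<lambda>k. a * x k) \<in> C)"

definition herm_ip :: "nat \<Rightarrow> (nat \<Rightarrow> f4) \<Rightarrow> (nat \<Rightarrow> f4) \<Rightarrow> f4" where
  "herm_ip n x y = (\<Sum>k<n. x k * (y k)^2)"

definition herm_dual :: "nat \<Rightarrow> (nat \<Rightarrow> f4) set \<Rightarrow> (nat \<Rightarrow> f4) set" where
  "herm_dual n C = {y \<in> vecs n. \<forall>x\<in>C. herm_ip n x y = 0}"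

definition herm_self_dual :: "nat \<Rightarrow> (nat \<Rightarrow> f4) set \<Rightarrow> bool" where
  "herm_self_dual n C \<longleftrightarrow> is_code n C \<and> herm_dual n C = C"

definition wt :: "nat \<Rightarrow> (nat \<Rightarrow> f4) \<Rightarrow> nat" where
  "wt n x = card {k. k < n \<and> x k \<noteq> 0}"

definition min_weight :: "nat \<Rightarrow> (nat \<Rightarrow> f4) set \<Rightarrow> nat" where
  "min_weight n C = Min (wt n ` (C - {\<lambda>_. 0}))"

definition extremal_herm_sd :: "nat \<Rightarrow> (nat \<Rightarrow> f4) set \<Rightarrow> bool" where
  "extremal_herm_sd n C \<longleftrightarrow> herm_self_dual n C \<and> min_weight n C = 2 * (n div 6) + 2"

definition weight_count :: "nat \<Rightarrow> (nat \<Rightarrow> f4) set \<Rightarrow> nat \<Rightarrow> nat" where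
  "weight_count n C j = card {x \<in> C. wt n x = j}"

end

theory Submission
  imports Defs "HOL-Computational_Algebra.Polynomial_Factorial" "HOL-Computational_Algebra.Field_as_Ring"
    "HOL-Library.FuncSet"
begin

(* The weight enumerator W(t) = sum_j B_j t^j of a Hermitian self-dual code of length n has only
   even exponents, and the MacWilliams identity gives 2^n W(t) = (1 + 3t)^n W((1 - t)/(1 + 3t)).
   A polynomial of degree at most n with both properties that is divisible by t^k, 3k > n,
   vanishes: the identity makes it divisible by (1 - t)^k, and evenness then by (1 + t)^k.
   For an extremal code of length 6m this pins W down by W = 1 + O(t^(2m+2)), so it suffices to
   exhibit one such polynomial that is 1 modulo 9. Start from f^(3m), where f = 1 + 3t^2 and
   f^3 = 1 + 9t^2 (1 + 3t^2 + 3t^4), and clear the coefficients of t^2, ..., t^(2m) one after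
   the other by subtracting integer multiples of 9 g^j f^(3(m-j)), where g = t^2 (1 - t^2)^2. *)

lemma UNIV_f4: "(UNIV :: f4 set) = {F0, F1, Fw, Fw2}"
proof -
  have "x \<in> {F0, F1, Fw, Fw2}" for x
    by (cases x) auto
  then show ?thesis
    by auto
qed

instance f4 :: finite
  by standard (simp add: UNIV_f4)

lemma f4_add_self [simp]: "(a::f4) + a = 0"
  by (cases a) (simp_all add: plus_f4_def zero_f4_def)

lemma of_nat_f4: "(of_nat w :: f4) = (if even w then 0 else 1)"
  by (induction w) simp_all

lemma f4_mult_square: "(a::f4) * a^2 = (if a = 0 then 0 else 1)"
  by (cases a) (simp_all add: power2_eq_square times_f4_def zero_f4_def one_f4_def)

text \<open>The additive character \<open>(-1)^Tr(a)\<close>, where \<open>Tr(a) = a + a^2\<close> is the trace onto F2.\<close>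

definition tr_char :: "f4 \<Rightarrow> real" where
  "tr_char a = (if a = F0 \<or> a = F1 then 1 else -1)"

lemma tr_char_0 [simp]: "tr_char 0 = 1"
  by (simp add: tr_char_def zero_f4_def)

lemma tr_char_add: "tr_char (a + b) = tr_char a * tr_char b"
  by (cases a; cases b) (simp_all add: tr_char_def plus_f4_def)

lemma tr_char_sum: "tr_char (\<Sum>k\<in>A. f k) = (\<Prod>k\<in>A. tr_char (f k))"
  by (induction A rule: infinite_finite_induct) (simp_all add: tr_char_add)

lemma sum_tr_char_weight:
  "(\<Sum>a\<in>UNIV. tr_char (c * a^2) * (if a = 0 then x else y)) =
     (if c = 0 then x + 3*y else x - y)"
  by (cases c) (simp_all add: UNIV_f4 tr_char_def power2_eq_square times_f4_def zero_f4_def)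

lemma bij_betw_restrict_vecs:
  "bij_betw (\<lambda>u. restrict u {..<n}) (vecs n) (PiE {..<n} (\<lambda>_. UNIV))"
proof (rule bij_betwI[where g = "\<lambda>g k. if k < n then g k else 0"])
  show "(\<lambda>u. restrict u {..<n}) \<in> vecs n \<rightarrow> PiE {..<n} (\<lambda>_. UNIV)"
    by auto
  show "(\<lambda>g k. if k < n then g k else 0) \<in> PiE {..<n} (\<lambda>_. UNIV) \<rightarrow> vecs n"
    by (auto simp: vecs_def)
  show "(\<lambda>k. if k < n then restrict u {..<n} k else 0) = u" if "u \<in> vecs n" for u
    using that by (auto simp: vecs_def fun_eq_iff)
  show "restrict (\<lambda>k. if k < n then g k else 0) {..<n} = g"
    if "g \<in> PiE {..<n} (\<lambda>_. UNIV)" for g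
    using that by (auto simp: fun_eq_iff PiE_def extensional_def)
qed

lemma finite_vecs: "finite (vecs n)"
  using bij_betw_finite[OF bij_betw_restrict_vecs] by (simp add: finite_PiE)

lemma finite_code: "is_code n C \<Longrightarrow> finite C"
  using finite_vecs finite_subset by (auto simp: is_code_def)

lemma sum_vecs_prod:
  fixes G :: "nat \<Rightarrow> f4 \<Rightarrow> 'a::comm_semiring_1"
  shows "(\<Sum>u\<in>vecs n. \<Prod>k<n. G k (u k)) = (\<Prod>k<n. \<Sum>a\<in>UNIV. G k a)"
proof -
  have "(\<Sum>u\<in>vecs n. \<Prod>k<n. G k (u k)) = (\<Sum>u\<in>vecs n. \<Prod>k<n. G k (restrict u {..<n} k))"
    by simp
  also have "\<dots> = (\<Sum>g\<in>PiE {..<n} (\<lambda>_. UNIV). \<Prod>k<n. G k (g k))"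
    by (rule sum.reindex_bij_betw[OF bij_betw_restrict_vecs])
  also have "\<dots> = (\<Prod>k<n. \<Sum>a\<in>UNIV. G k a)"
    by (rule prod_sum_PiE[symmetric]) auto
  finally show ?thesis .
qed

lemma wt_le: "wt n u \<le> n"
  using card_mono[of "{..<n}" "{k. k < n \<and> u k \<noteq> 0}"] by (auto simp: wt_def)

lemma wt_zero [simp]: "wt n (\<lambda>_. 0) = 0"
  by (simp add: wt_def)

lemma wt_eq_0_iff: "u \<in> vecs n \<Longrightarrow> wt n u = 0 \<longleftrightarrow> u = (\<lambda>_. 0)"
  by (auto simp: wt_def vecs_def fun_eq_iff) (metis not_le)

lemma prod_weight:
  "(\<Prod>k<n. if u k = 0 then a else b) = a^(n - wt n u) * (b::'a::comm_monoid_mult)^(wt n u)"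
proof -
  let ?S = "{k. k < n \<and> u k \<noteq> 0}"
  have "{..<n} \<inter> {k. u k = 0} = {..<n} - ?S" "{..<n} \<inter> - {k. u k = 0} = ?S"
    by auto
  then have "(\<Prod>k<n. if u k = 0 then a else b) = (\<Prod>k\<in>{..<n} - ?S. a) * (\<Prod>k\<in>?S. b)"
    by (simp add: prod.If_cases)
  moreover have "card ({..<n} - ?S) = n - wt n u"
    by (subst card_Diff_subset) (auto simp: wt_def)
  ultimately show ?thesis
    by (simp add: wt_def)
qed

lemma herm_ip_add_scaled:
  "herm_ip n (\<lambda>k. x k + b * y k) u = herm_ip n x u + b * herm_ip n y u"
  unfolding herm_ip_def by (simp add: sum.distrib sum_distrib_left algebra_simps)

section \<open>The MacWilliams identity\<close>

lemma herm_self_dual_char_sum: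
  assumes sd: "herm_self_dual n C" and u: "u \<in> vecs n"
  shows "(\<Sum>c\<in>C. tr_char (herm_ip n c u)) = (if u \<in> C then real (card C) else 0)"
proof (cases "u \<in> C")
  case True
  then have "\<forall>c\<in>C. herm_ip n c u = 0"
    using sd by (auto simp: herm_self_dual_def herm_dual_def)
  then show ?thesis
    using True by simp
next
  case False
  have code: "is_code n C"
    using sd by (simp add: herm_self_dual_def)
  obtain c0 where c0: "c0 \<in> C" "herm_ip n c0 u \<noteq> 0"
    using sd False u by (auto simp: herm_self_dual_def herm_dual_def)
  define b where "b = Fw * inverse (herm_ip n c0 u)"
  have b: "b * herm_ip n c0 u = Fw"
    using c0(2) by (simp add: b_def mult.assoc)
  define \<phi> where "\<phi> c = (\<lambda>k. c k + b * c0 k)" for c :: "nat \<Rightarrow> f4"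
  have \<phi>_C: "\<phi> c \<in> C" if "c \<in> C" for c
    using code that c0(1) by (simp add: is_code_def \<phi>_def)
  have \<phi>_\<phi>: "\<phi> (\<phi> c) = c" for c
    by (simp add: \<phi>_def add.assoc)
  \<comment> \<open>The involution \<open>\<phi>\<close> shifts every inner product with \<open>u\<close> by \<open>\<omega>\<close>, so \<open>tr_char\<close> changes sign.\<close>
  have "(\<Sum>c\<in>C. tr_char (herm_ip n c u)) = (\<Sum>c\<in>C. tr_char (herm_ip n (\<phi> c) u))"
    by (rule sum.reindex_bij_witness[where i = \<phi> and j = \<phi>]) (auto simp: \<phi>_\<phi> \<phi>_C)
  also have "\<dots> = (\<Sum>c\<in>C. tr_char (herm_ip n c u) * tr_char Fw)"
    by (simp add: \<phi>_def herm_ip_add_scaled tr_char_add b)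
  also have "\<dots> = - (\<Sum>c\<in>C. tr_char (herm_ip n c u))"
    by (simp add: tr_char_def sum_negf)
  finally show ?thesis
    using False by simp
qed

lemma sum_vecs_tr_char_weight:
  "(\<Sum>u\<in>vecs n. tr_char (herm_ip n c u) * (x^(n - wt n u) * y^(wt n u))) =
     (x + 3*y)^(n - wt n c) * (x - y)^(wt n c)"
proof -
  have "(\<Sum>u\<in>vecs n. tr_char (herm_ip n c u) * (x^(n - wt n u) * y^(wt n u))) =
      (\<Sum>u\<in>vecs n. \<Prod>k<n. tr_char (c k * (u k)^2) * (if u k = 0 then x else y))"
    by (simp add: herm_ip_def tr_char_sum prod_weight[symmetric] prod.distrib)
  also have "\<dots> = (\<Prod>k<n. \<Sum>a\<in>UNIV. tr_char (c k * a^2) * (if a = 0 then x else y))"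
    by (rule sum_vecs_prod)
  also have "\<dots> = (\<Prod>k<n. if c k = 0 then x + 3*y else x - y)"
    by (simp add: sum_tr_char_weight)
  finally show ?thesis
    by (simp add: prod_weight)
qed

lemma macwilliams_identity:
  fixes x y :: real
  assumes sd: "herm_self_dual n C"
  shows "real (card C) * (\<Sum>c\<in>C. x^(n - wt n c) * y^(wt n c)) =
         (\<Sum>c\<in>C. (x + 3*y)^(n - wt n c) * (x - y)^(wt n c))"
proof -
  define M where "M u = x^(n - wt n u) * y^(wt n u)" for u
  have CV: "C \<subseteq> vecs n"
    using sd by (simp add: herm_self_dual_def is_code_def)
  have "(\<Sum>c\<in>C. \<Sum>u\<in>vecs n. tr_char (herm_ip n c u) * M u) =
      (\<Sum>u\<in>vecs n. \<Sum>c\<in>C. tr_char (herm_ip n c u) * M u)"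
    by (rule sum.swap)
  also have "\<dots> = (\<Sum>u\<in>vecs n. (if u \<in> C then real (card C) else 0) * M u)"
    by (intro sum.cong refl) (simp add: sum_distrib_right[symmetric] herm_self_dual_char_sum[OF sd])
  also have "\<dots> = real (card C) * (\<Sum>c\<in>C. M c)"
    unfolding sum_distrib_left using CV by (intro sum.mono_neutral_cong_right finite_vecs) auto
  finally show ?thesis
    by (simp add: M_def sum_vecs_tr_char_weight)
qed

lemma herm_self_dual_even_wt:
  assumes sd: "herm_self_dual n C" and c: "c \<in> C"
  shows "even (wt n c)"
proof -
  have "herm_ip n c c = 0"
    using sd c by (auto simp: herm_self_dual_def herm_dual_def)
  moreover have "herm_ip n c c = (\<Sum>k\<in>{k. k < n \<and> c k \<noteq> 0}. 1)"
    unfolding herm_ip_def f4_mult_square by (simp add: sum.If_cases Int_def)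
  ultimately have "(of_nat (wt n c) :: f4) = 0"
    by (simp add: wt_def)
  then show ?thesis
    by (simp add: of_nat_f4 split: if_splits)
qed

lemma card_herm_self_dual:
  assumes sd: "herm_self_dual n C"
  shows "real (card C) = 2^n"
proof -
  have code: "is_code n C"
    using sd by (simp add: herm_self_dual_def)
  have zero: "(\<lambda>_. 0) \<in> C" and CV: "C \<subseteq> vecs n"
    using code by (simp_all add: is_code_def)
  \<comment> \<open>The identity at \<open>x = y = 1\<close>: only the zero word survives on the right.\<close>
  have "real (card C) * real (card C) = (\<Sum>c\<in>C. 4^(n - wt n c) * 0^(wt n c))"
    using macwilliams_identity[OF sd, of 1 1] by simp
  also have "\<dots> = (\<Sum>c\<in>C. if c = (\<lambda>_. 0) then 4^n else 0)"
    using CV wt_eq_0_iff by (intro sum.cong refl) (auto simp: subset_iff)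
  also have "\<dots> = 4^n"
    using zero finite_code[OF code] by simp
  finally have "real (card C)^2 = (2^n)^2"
    by (simp add: power2_eq_square power_mult_distrib[symmetric])
  then show ?thesis
    by (simp add: power2_eq_iff_nonneg)
qed

lemma power_diff_mult_power:
  fixes a s :: "'a::comm_monoid_mult"
  assumes "w \<le> n"
  shows "a^(n - w) * (s * a)^w = a^n * s^w"
proof -
  have "a^(n - w) * (s * a)^w = (a^(n - w) * a^w) * s^w"
    by (simp add: power_mult_distrib mult_ac)
  also have "\<dots> = a^n * s^w"
    by (simp only: power_add[symmetric] le_add_diff_inverse2[OF assms])
  finally show ?thesis .
qed

definition weight_enum :: "nat \<Rightarrow> (nat \<Rightarrow> f4) set \<Rightarrow> real poly" where
  "weight_enum n C = (\<Sum>c\<in>C. monom 1 (wt n c))"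

lemma coeff_weight_enum:
  "finite C \<Longrightarrow> coeff (weight_enum n C) j = real (weight_count n C j)"
  by (simp add: weight_enum_def weight_count_def coeff_sum coeff_monom sum.If_cases Int_def)

text \<open>Dehomogenization (\<open>x = 1\<close>, \<open>y = t\<close>) of the MacWilliams identity
  \<open>2^n W(x, y) = W(x + 3y, x - y)\<close>.\<close>

definition macwilliams_invariant :: "nat \<Rightarrow> real poly \<Rightarrow> bool" where
  "macwilliams_invariant n p \<longleftrightarrow> (\<forall>t. 1 + 3*t \<noteq> 0 \<longrightarrow>
      2^n * poly p t = (1 + 3*t)^n * poly p ((1 - t) / (1 + 3*t)))"

lemma macwilliams_invariantI:
  assumes "\<And>t s. s * (1 + 3*t) = 1 - t \<Longrightarrow> 2^n * poly p t = (1 + 3*t)^n * poly p s"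
  shows "macwilliams_invariant n p"
  using assms by (simp add: macwilliams_invariant_def)

lemma macwilliams_invariant_mult:
  assumes "macwilliams_invariant a p" "macwilliams_invariant b q"
  shows "macwilliams_invariant (a + b) (p * q)"
proof (rule macwilliams_invariantI)
  fix t s :: real assume s: "s * (1 + 3*t) = 1 - t"
  then have "1 + 3*t \<noteq> 0" and "s = (1 - t) / (1 + 3*t)"
    by (auto simp: eq_divide_eq)
  then have "(2^a * poly p t) * (2^b * poly q t) = ((1 + 3*t)^a * poly p s) * ((1 + 3*t)^b * poly q s)"
    using assms by (simp add: macwilliams_invariant_def)
  then show "2^(a + b) * poly (p * q) t = (1 + 3*t)^(a + b) * poly (p * q) s"
    by (simp add: power_add algebra_simps)
qed

lemma macwilliams_invariant_power:
  assumes "macwilliams_invariant a p"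
  shows "macwilliams_invariant (a * j) (p ^ j)"
proof (induction j)
  case 0
  show ?case
    by (simp add: macwilliams_invariant_def)
next
  case (Suc j)
  then have "macwilliams_invariant (a + a * j) (p * p ^ j)"
    using assms by (intro macwilliams_invariant_mult)
  then show ?case
    by (simp add: algebra_simps)
qed

lemma macwilliams_invariant_diff_smult:
  "macwilliams_invariant n p \<Longrightarrow> macwilliams_invariant n q \<Longrightarrow>
     macwilliams_invariant n (p - smult c q)"
  by (simp add: macwilliams_invariant_def algebra_simps)

definition even_poly :: "'a::zero poly \<Rightarrow> bool" where
  "even_poly p \<longleftrightarrow> (\<forall>i. odd i \<longrightarrow> coeff p i = 0)"

lemma even_poly_mult:
  fixes p q :: "'a::comm_semiring_0 poly"
  assumes "even_poly p" "even_poly q"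
  shows "even_poly (p * q)"
  unfolding even_poly_def coeff_mult
proof (intro allI impI sum.neutral ballI)
  fix i j :: nat assume "odd i" "j \<in> {..i}"
  then have "odd (j + (i - j))"
    by simp
  then have "odd j \<or> odd (i - j)"
    by auto
  then show "coeff p j * coeff q (i - j) = 0"
    using assms unfolding even_poly_def by (metis mult_zero_left mult_zero_right)
qed

lemma even_poly_power:
  assumes "even_poly (p :: 'a::comm_semiring_1 poly)"
  shows "even_poly (p ^ j)"
proof (induction j)
  case 0
  show ?case
    by (auto simp: even_poly_def coeff_1 odd_pos)
next
  case (Suc j)
  then show ?case
    using assms by (simp add: even_poly_mult)
qed

text \<open>The hypotheses of Gleason's theorem on weight enumerators of Hermitian self-dual codes.\<close>

definition gleason_poly :: "nat \<Rightarrow> real poly \<Rightarrow> bool" where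
  "gleason_poly n p \<longleftrightarrow> macwilliams_invariant n p \<and> degree p \<le> n \<and> even_poly p"

lemma gleason_poly_diff_smult:
  "gleason_poly n p \<Longrightarrow> gleason_poly n q \<Longrightarrow> gleason_poly n (p - smult c q)"
  unfolding gleason_poly_def even_poly_def
  by (auto simp: macwilliams_invariant_diff_smult intro: degree_diff_le order.trans[OF degree_smult_le])

lemma weight_enum_gleason_poly:
  assumes sd: "herm_self_dual n C"
  shows "gleason_poly n (weight_enum n C)"
  unfolding gleason_poly_def
proof (intro conjI)
  have code: "is_code n C"
    using sd by (simp add: herm_self_dual_def)
  show "macwilliams_invariant n (weight_enum n C)"
  proof (rule macwilliams_invariantI)
    fix t s :: real assume s: "s * (1 + 3*t) = 1 - t"
    have "2^n * poly (weight_enum n C) t = real (card C) * (\<Sum>c\<in>C. 1^(n - wt n c) * t^(wt n c))"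
      by (simp add: weight_enum_def poly_sum poly_monom card_herm_self_dual[OF sd])
    also have "\<dots> = (\<Sum>c\<in>C. (1 + 3*t)^(n - wt n c) * (s * (1 + 3*t))^(wt n c))"
      unfolding macwilliams_identity[OF sd] s ..
    also have "\<dots> = (\<Sum>c\<in>C. (1 + 3*t)^n * s^(wt n c))"
      by (simp only: power_diff_mult_power[OF wt_le])
    finally show "2^n * poly (weight_enum n C) t = (1 + 3*t)^n * poly (weight_enum n C) s"
      by (simp add: weight_enum_def poly_sum poly_monom sum_distrib_left)
  qed
  show "degree (weight_enum n C) \<le> n"
    unfolding weight_enum_def
    by (intro degree_sum_le finite_code[OF code]) (simp add: degree_monom_eq wt_le)
  show "even_poly (weight_enum n C)"
    using herm_self_dual_even_wt[OF sd]
    by (auto simp: even_poly_def coeff_weight_enum finite_code[OF code] weight_count_def)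
qed

section \<open>Uniqueness of invariant polynomials with a long gap\<close>

definition mac_transform :: "nat \<Rightarrow> real poly \<Rightarrow> real poly" where
  "mac_transform d r = (\<Sum>i\<le>d. smult (coeff r i) ([:1, 3:]^(d - i) * [:1, -1:]^i))"

lemma poly_mac_transform:
  assumes "degree r \<le> d" "1 + 3*t \<noteq> (0::real)"
  shows "poly (mac_transform d r) t = (1 + 3*t)^d * poly r ((1 - t) / (1 + 3*t))"
proof -
  let ?s = "(1 - t) / (1 + 3*t)"
  have "poly r ?s = poly (\<Sum>i\<le>d. monom (coeff r i) i) ?s"
    by (simp only: poly_as_sum_of_monoms'[OF assms(1)])
  then have r: "poly r ?s = (\<Sum>i\<le>d. coeff r i * ?s^i)"
    by (simp add: poly_sum poly_monom)
  have "(1 + 3*t)^(d - i) * (1 - t)^i = (1 + 3*t)^d * ?s^i" if "i \<le> d" for i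
  proof -
    have "(1 + 3*t)^(d - i) * (?s * (1 + 3*t))^i = (1 + 3*t)^d * ?s^i"
      by (rule power_diff_mult_power[OF that])
    then show ?thesis
      using assms(2) by simp
  qed
  moreover have "poly (mac_transform d r) t = (\<Sum>i\<le>d. coeff r i * ((1 + 3*t)^(d - i) * (1 - t)^i))"
    by (simp add: mac_transform_def poly_sum ac_simps)
  ultimately have "poly (mac_transform d r) t = (\<Sum>i\<le>d. (1 + 3*t)^d * (coeff r i * ?s^i))"
    by (simp add: mult.left_commute)
  then show ?thesis
    by (simp add: r sum_distrib_left)
qed

lemma poly_eq_if_poly_eq_except:
  fixes p q :: "'a::{idom, ring_char_0} poly"
  assumes "\<And>t. t \<noteq> a \<Longrightarrow> poly p t = poly q t"
  shows "p = q"
proof (rule ccontr)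
  assume "p \<noteq> q"
  then have "finite {x. poly (p - q) x = 0}"
    by (intro poly_roots_finite) simp
  moreover have "UNIV \<subseteq> insert a {x. poly (p - q) x = 0}"
    using assms by auto
  ultimately show False
    using finite_subset infinite_UNIV_char_0 by (metis finite_insert)
qed

lemma macwilliams_invariant_monom_dvd:
  assumes inv: "macwilliams_invariant n p" and deg: "degree p \<le> n"
    and dvd: "monom 1 k dvd p" and "p \<noteq> 0"
  shows "[:1, -1:]^k dvd p"
proof -
  obtain r where r: "p = monom 1 k * r"
    using dvd by (elim dvdE)
  have kn: "k \<le> n" and degr: "degree r \<le> n - k"
    using deg \<open>p \<noteq> 0\<close> by (auto simp: r degree_mult_eq degree_monom_eq)
  \<comment> \<open>\<open>t^k\<close> is transformed into \<open>(1 - t)^k\<close>, the rest stays polynomial.\<close>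
  have "smult (2^n) p = [:1, -1:]^k * mac_transform (n - k) r"
  proof (rule poly_eq_if_poly_eq_except[where a = "-1/3"])
    fix t :: real assume "t \<noteq> -1/3"
    then have t: "1 + 3*t \<noteq> 0"
      by auto
    have "poly (smult (2^n) p) t =
        (1 + 3*t)^((n - k) + k) * (((1 - t) / (1 + 3*t))^k * poly r ((1 - t) / (1 + 3*t)))"
      using inv t kn by (simp add: macwilliams_invariant_def r poly_monom)
    also have "\<dots> = (1 - t)^k * ((1 + 3*t)^(n - k) * poly r ((1 - t) / (1 + 3*t)))"
      using t by (simp add: power_add power_divide field_simps)
    finally show "poly (smult (2^n) p) t = poly ([:1, -1:]^k * mac_transform (n - k) r) t"
      by (simp add: poly_mac_transform[OF degr t])
  qed
  then have "[:1, -1:]^k dvd smult (2^n) p"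
    by simp
  then show ?thesis
    by (simp add: dvd_smult_iff)
qed

lemma even_poly_dvd_reflect:
  assumes "even_poly (p :: real poly)" "[:1, -1:]^k dvd p"
  shows "[:1, 1:]^k dvd p"
proof -
  obtain S where S: "p = [:1, -1:]^k * S"
    using assms(2) by (elim dvdE)
  have "poly p t = poly ([:1, 1:]^k * pcompose S [:0, -1:]) t" for t
  proof -
    have "poly p t = poly p (-t)"
      using assms(1) unfolding poly_altdef even_poly_def
      by (intro sum.cong refl) (metis mult_zero_left power_minus_even)
    also have "\<dots> = poly ([:1, 1:]^k * pcompose S [:0, -1:]) t"
      by (simp add: S poly_pcompose)
    finally show ?thesis .
  qed
  then have "p = [:1, 1:]^k * pcompose S [:0, -1:]"
    using poly_eq_poly_eq_iff by blast
  then show ?thesis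
    by (metis dvd_triv_left)
qed

lemma coprime_if_lincomb_eq_1:
  fixes a b :: "'a::field poly"
  assumes "smult u a + smult v b = 1"
  shows "coprime a b"
proof (rule coprimeI)
  fix c assume "c dvd a" "c dvd b"
  then have "c dvd smult u a + smult v b"
    by (simp add: dvd_add dvd_smult)
  then show "is_unit c"
    using assms by simp
qed

lemma gleason_poly_eq_0:
  assumes p: "gleason_poly n p" and low: "\<And>i. i < k \<Longrightarrow> coeff p i = 0" and nk: "n < 3*k"
  shows "p = 0"
proof (rule ccontr)
  assume "p \<noteq> 0"
  have inv: "macwilliams_invariant n p" and deg: "degree p \<le> n" and ev: "even_poly p"
    using p by (simp_all add: gleason_poly_def)
  have monom_dvd: "monom 1 k dvd p"
    using low by (simp add: monom_1_dvd_iff')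
  then have d0: "[:0, 1:]^k dvd p"
    by (simp add: monom_altdef)
  have d1: "[:1, -1:]^k dvd p"
    by (rule macwilliams_invariant_monom_dvd[OF inv deg monom_dvd \<open>p \<noteq> 0\<close>])
  have d2: "[:1, 1:]^k dvd p"
    by (rule even_poly_dvd_reflect[OF ev d1])
  have c01: "coprime [:0, 1:] [:1, -1::real:]"
    by (rule coprime_if_lincomb_eq_1[where u = 1 and v = 1]) simp
  have c02: "coprime [:0, 1:] [:1, 1::real:]"
    by (rule coprime_if_lincomb_eq_1[where u = "-1" and v = 1]) simp
  have c12: "coprime [:1, -1:] [:1, 1::real:]"
    by (rule coprime_if_lincomb_eq_1[where u = "1/2" and v = "1/2"]) simp
  have "[:0, 1:]^k * [:1, -1:]^k dvd p"
    by (rule divides_mult[OF d0 d1]) (simp add: c01)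
  then have "[:0, 1:]^k * [:1, -1:]^k * [:1, 1:]^k dvd p"
    by (rule divides_mult[OF _ d2]) (simp add: c02 c12)
  then have "degree ([:0, 1:]^k * [:1, -1:]^k * [:1, 1::real:]^k) \<le> degree p"
    using \<open>p \<noteq> 0\<close> by (rule dvd_imp_degree_le)
  then show False
    using deg nk by (simp add: degree_mult_eq degree_power_eq)
qed

lemma gleason_poly_unique:
  assumes "gleason_poly n p" "gleason_poly n q"
    and "\<And>i. i < k \<Longrightarrow> coeff p i = coeff q i" and "n < 3*k"
  shows "p = q"
proof -
  have "gleason_poly n (p - q)"
    using gleason_poly_diff_smult[OF assms(1,2), of 1] by simp
  then have "p - q = 0"
    using assms(3,4) by (intro gleason_poly_eq_0[of n _ k]) simp_all
  then show ?thesis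
    by simp
qed

section \<open>A Gleason polynomial congruent to 1 modulo 9\<close>

definition int_coeffs :: "real poly \<Rightarrow> bool" where
  "int_coeffs p \<longleftrightarrow> (\<forall>i. coeff p i \<in> \<int>)"

definition one_mod_9 :: "real poly \<Rightarrow> bool" where
  "one_mod_9 q \<longleftrightarrow> (\<exists>E. int_coeffs E \<and> coeff E 0 = 0 \<and> q = 1 + smult 9 E)"

lemma int_coeffs_mult: "int_coeffs p \<Longrightarrow> int_coeffs q \<Longrightarrow> int_coeffs (p * q)"
  unfolding int_coeffs_def coeff_mult by (auto intro!: Ints_sum Ints_mult)

lemma int_coeffs_power:
  assumes "int_coeffs p"
  shows "int_coeffs (p ^ j)"
proof (induction j)
  case 0
  show ?case
    by (simp add: int_coeffs_def coeff_1)
next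
  case (Suc j)
  then show ?case
    using assms by (simp add: int_coeffs_mult)
qed

lemma int_coeffs_add: "int_coeffs p \<Longrightarrow> int_coeffs q \<Longrightarrow> int_coeffs (p + q)"
  unfolding int_coeffs_def by (auto intro!: Ints_add)

lemma int_coeffs_diff: "int_coeffs p \<Longrightarrow> int_coeffs q \<Longrightarrow> int_coeffs (p - q)"
  unfolding int_coeffs_def by (auto intro!: Ints_diff)

lemma int_coeffs_smult: "c \<in> \<int> \<Longrightarrow> int_coeffs p \<Longrightarrow> int_coeffs (smult c p)"
  unfolding int_coeffs_def by (auto intro!: Ints_mult)

lemma one_mod_9_mult: "one_mod_9 p \<Longrightarrow> one_mod_9 q \<Longrightarrow> one_mod_9 (p * q)"
proof -
  assume "one_mod_9 p" "one_mod_9 q"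
  then obtain E F where E: "int_coeffs E" "coeff E 0 = 0" "p = 1 + smult 9 E"
    and F: "int_coeffs F" "coeff F 0 = 0" "q = 1 + smult 9 F"
    by (auto simp: one_mod_9_def)
  have "p * q = 1 + smult 9 (E + F + smult 9 (E * F))"
    using E F by (simp add: algebra_simps smult_add_right)
  moreover have "int_coeffs (E + F + smult 9 (E * F))"
    using E F by (intro int_coeffs_add int_coeffs_smult int_coeffs_mult) auto
  moreover have "coeff (E + F + smult 9 (E * F)) 0 = 0"
    using E F by (simp add: coeff_mult)
  ultimately show ?thesis
    unfolding one_mod_9_def by blast
qed

lemma one_mod_9_diff_smult:
  assumes "one_mod_9 q" "int_coeffs h" "coeff h 0 = 0" "b \<in> \<int>"
  shows "one_mod_9 (q - smult (9 * b) h)"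
proof -
  obtain E where E: "int_coeffs E" "coeff E 0 = 0" "q = 1 + smult 9 E"
    using assms(1) by (auto simp: one_mod_9_def)
  have "q - smult (9 * b) h = 1 + smult 9 (E - smult b h)"
    by (simp add: E(3) smult_diff_right)
  moreover have "int_coeffs (E - smult b h)"
    using assms(2,4) E(1) by (simp add: int_coeffs_diff int_coeffs_smult)
  ultimately show ?thesis
    unfolding one_mod_9_def using assms(3) E(2) by (intro exI[of _ "E - smult b h"]) simp
qed

lemma one_mod_9_power: "one_mod_9 p \<Longrightarrow> one_mod_9 (p ^ j)"
proof (induction j)
  case 0
  show ?case
    unfolding one_mod_9_def by (intro exI[of _ 0]) (simp add: int_coeffs_def)
next
  case (Suc j)
  then show ?case
    by (simp add: one_mod_9_mult)
qed

lemma coeff_one_mod_9: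
  assumes "one_mod_9 q"
  shows "coeff q 0 = 1" and "0 < i \<Longrightarrow> \<exists>z. coeff q i = 9 * of_int z"
proof -
  obtain E where E: "int_coeffs E" "coeff E 0 = 0" "q = 1 + smult 9 E"
    using assms by (auto simp: one_mod_9_def)
  show "coeff q 0 = 1"
    using E by simp
  obtain z where "coeff E i = of_int z"
    using E(1) Ints_cases unfolding int_coeffs_def by metis
  then show "0 < i \<Longrightarrow> \<exists>z. coeff q i = 9 * of_int z"
    using E(3) by (simp add: coeff_1)
qed

text \<open>The invariants \<open>x^2 + 3y^2\<close> and \<open>y^2 (x^2 - y^2)^2\<close> of Gleason's theorem at \<open>x = 1\<close>, \<open>y = t\<close>.\<close>

definition gleason_f :: "real poly" where
  "gleason_f = [:1, 0, 3:]"

definition gleason_g :: "real poly" where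
  "gleason_g = monom 1 2 * [:1, 0, -1:]^2"

definition gleason_basis :: "nat \<Rightarrow> nat \<Rightarrow> real poly" where
  "gleason_basis m j = gleason_g^j * gleason_f^(3 * (m - j))"

lemma macwilliams_invariant_gleason_f: "macwilliams_invariant 2 gleason_f"
proof (rule macwilliams_invariantI)
  fix t s :: real assume s: "s * (1 + 3*t) = 1 - t"
  have "(1 + 3*t)^2 * poly gleason_f s = (1 + 3*t)^2 + 3 * (s * (1 + 3*t))^2"
    by (simp add: gleason_f_def algebra_simps power2_eq_square)
  also have "\<dots> = 2^2 * poly gleason_f t"
    unfolding s by (simp add: gleason_f_def algebra_simps power2_eq_square)
  finally show "2^2 * poly gleason_f t = (1 + 3*t)^2 * poly gleason_f s" ..
qed

lemma macwilliams_invariant_gleason_g: "macwilliams_invariant 6 gleason_g"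
proof (rule macwilliams_invariantI)
  fix t s :: real assume s: "s * (1 + 3*t) = 1 - t"
  have g: "poly gleason_g x = x^2 * (1 - x^2)^2" for x :: real
    by (simp add: gleason_g_def poly_monom power2_eq_square algebra_simps)
  have "(1 + 3*t)^6 * poly gleason_g s =
      (s * (1 + 3*t))^2 * ((1 + 3*t)^2 - (s * (1 + 3*t))^2)^2"
    unfolding g by algebra
  also have "\<dots> = 2^6 * poly gleason_g t"
    unfolding s g by algebra
  finally show "2^6 * poly gleason_g t = (1 + 3*t)^6 * poly gleason_g s" ..
qed

lemma gleason_poly_gleason_basis:
  assumes "j \<le> m"
  shows "gleason_poly (6*m) (gleason_basis m j)"
  unfolding gleason_poly_def
proof (intro conjI)
  have deg: "6*m = 6*j + 2 * (3 * (m - j))"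
    using assms by simp
  show "macwilliams_invariant (6*m) (gleason_basis m j)"
    unfolding deg gleason_basis_def
    by (intro macwilliams_invariant_mult macwilliams_invariant_power
        macwilliams_invariant_gleason_f macwilliams_invariant_gleason_g)
  have "degree gleason_g \<le> 6"
    unfolding gleason_g_def using degree_mult_le[of "monom 1 2" "[:1, 0, -1::real:]^2"]
    by (simp add: degree_monom_eq degree_power_eq)
  then have "degree (gleason_g^j) \<le> 6*j"
    by (metis degree_power_le le_trans mult.commute mult_le_mono2)
  moreover have "degree (gleason_f^(3 * (m - j))) \<le> 2 * (3 * (m - j))"
    using degree_power_le[of gleason_f "3 * (m - j)"] by (simp add: gleason_f_def)
  ultimately show "degree (gleason_basis m j) \<le> 6*m"
    unfolding deg gleason_basis_def using degree_mult_le add_mono order.trans by blast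
  have "even_poly gleason_f" "even_poly [:1, 0, -1::real:]" "even_poly (monom 1 2 :: real poly)"
    by (auto simp: even_poly_def gleason_f_def coeff_pCons coeff_monom split: nat.split)
  then show "even_poly (gleason_basis m j)"
    by (simp add: gleason_basis_def gleason_g_def even_poly_mult even_poly_power)
qed

lemma int_coeffs_gleason_basis: "int_coeffs (gleason_basis m j)"
proof -
  have "int_coeffs gleason_f" "int_coeffs [:1, 0, -1:]" "int_coeffs (monom 1 2)"
    by (auto simp: int_coeffs_def gleason_f_def coeff_pCons coeff_monom split: nat.split)
  then show ?thesis
    unfolding gleason_basis_def gleason_g_def by (intro int_coeffs_mult int_coeffs_power)
qed

lemma coeff_gleason_basis:
  shows coeff_gleason_basis_less: "i < 2*j \<Longrightarrow> coeff (gleason_basis m j) i = 0"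
    and coeff_gleason_basis_lowest: "coeff (gleason_basis m j) (2*j) = 1"
proof -
  define R where "R = [:1, 0, -1:]^(2*j) * gleason_f^(3 * (m - j))"
  have "gleason_basis m j = monom 1 (2*j) * R"
    by (simp add: gleason_basis_def gleason_g_def R_def power_mult_distrib monom_power
        power_mult[symmetric] mult.assoc)
  moreover have "coeff R 0 = 1"
    by (simp add: R_def gleason_f_def poly_0_coeff_0[symmetric])
  ultimately show "i < 2*j \<Longrightarrow> coeff (gleason_basis m j) i = 0"
    and "coeff (gleason_basis m j) (2*j) = 1"
    by (simp_all add: coeff_monom_mult)
qed

lemma one_mod_9_gleason_basis_0: "one_mod_9 (gleason_basis m 0)"
proof -
  have "gleason_f^3 = 1 + smult 9 [:0, 0, 1, 0, 3, 0, 3:]"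
    by (simp add: gleason_f_def eval_nat_numeral one_pCons)
  then have "one_mod_9 (gleason_f^3)"
    unfolding one_mod_9_def
    by (intro exI[of _ "[:0, 0, 1, 0, 3, 0, 3:]"])
      (auto simp: int_coeffs_def coeff_pCons split: nat.split)
  then show ?thesis
    by (simp add: gleason_basis_def power_mult one_mod_9_power)
qed

lemma exists_one_mod_9_gleason_poly:
  "k \<le> m \<Longrightarrow> \<exists>q. one_mod_9 q \<and> gleason_poly (6*m) q \<and> (\<forall>i. 0 < i \<and> i \<le> 2*k \<longrightarrow> coeff q i = 0)"
proof (induction k)
  case 0
  then show ?case
    using one_mod_9_gleason_basis_0 gleason_poly_gleason_basis[of 0 m] by auto
next
  case (Suc k)
  then obtain q where q: "one_mod_9 q" "gleason_poly (6*m) q"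
    and gap: "\<forall>i. 0 < i \<and> i \<le> 2*k \<longrightarrow> coeff q i = 0"
    by auto
  obtain z where z: "coeff q (2 * Suc k) = 9 * of_int z"
    using coeff_one_mod_9(2)[OF q(1), of "2 * Suc k"] by auto
  let ?h = "gleason_basis m (Suc k)"
  have h: "gleason_poly (6*m) ?h"
    using Suc.prems by (rule gleason_poly_gleason_basis)
  define q' where "q' = q - smult (9 * of_int z) ?h"
  have "one_mod_9 q'"
    unfolding q'_def
    by (rule one_mod_9_diff_smult[OF q(1) int_coeffs_gleason_basis])
      (simp_all add: coeff_gleason_basis_less)
  moreover have "gleason_poly (6*m) q'"
    unfolding q'_def by (rule gleason_poly_diff_smult[OF q(2) h])
  moreover have "coeff q' i = 0" if "0 < i" "i \<le> 2 * Suc k" for i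
  proof -
    have "i \<le> 2*k \<or> i = 2*k + 1 \<or> i = 2 * Suc k"
      using that by presburger
    then consider "i \<le> 2*k" | "i = 2*k + 1" | "i = 2 * Suc k"
      by blast
    then show ?thesis
    proof cases
      case 1
      then show ?thesis
        using that gap by (simp add: q'_def coeff_gleason_basis_less)
    next
      case 2
      then show ?thesis
        using q(2) h by (simp add: q'_def gleason_poly_def even_poly_def)
    next
      case 3
      then show ?thesis
        using z coeff_gleason_basis_lowest[of m "Suc k"] by (simp add: q'_def)
    qed
  qed
  ultimately show ?case
    by blast
qed

lemma weight_count_extremal_low:
  assumes ext: "extremal_herm_sd (6*m) D" and i: "i \<le> 2*m + 1"
  shows "weight_count (6*m) D i = (if i = 0 then 1 else 0)"
proof -
  have code: "is_code (6*m) D"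
    using ext by (simp add: extremal_herm_sd_def herm_self_dual_def)
  have big: "2*m + 2 \<le> wt (6*m) c" if "c \<in> D" "c \<noteq> (\<lambda>_. 0)" for c
  proof -
    have "min_weight (6*m) D \<le> wt (6*m) c"
      unfolding min_weight_def using that finite_code[OF code] by (intro Min_le) auto
    then show ?thesis
      using ext by (simp add: extremal_herm_sd_def)
  qed
  have "wt (6*m) c = i \<longleftrightarrow> i = 0 \<and> c = (\<lambda>_. 0)" if "c \<in> D" for c
    using big[OF that] i by (cases "c = (\<lambda>_. 0)") auto
  then have "{c \<in> D. wt (6*m) c = i} = (if i = 0 then {\<lambda>_. 0} else {})"
    using code by (auto simp: is_code_def)
  then show ?thesis
    by (simp add: weight_count_def)
qed

theorem corollary3p6:
  fixes m :: nat and D :: "(nat \<Rightarrow> f4) set"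
  assumes "m > 0"
    and "extremal_herm_sd (6 * m) D"
  shows "\<forall>i. m + 1 \<le> i \<and> i \<le> 3 * m \<longrightarrow> weight_count (6 * m) D (2 * i) mod 9 = 0"
proof -
  have sd: "herm_self_dual (6*m) D"
    using assms(2) by (simp add: extremal_herm_sd_def)
  then have fin: "finite D"
    using finite_code by (auto simp: herm_self_dual_def)
  obtain q where q: "one_mod_9 q" "gleason_poly (6*m) q"
    and gap: "\<forall>i. 0 < i \<and> i \<le> 2*m \<longrightarrow> coeff q i = 0"
    using exists_one_mod_9_gleason_poly[of m m] by auto
  have W: "weight_enum (6*m) D = q"
  proof (rule gleason_poly_unique[OF weight_enum_gleason_poly[OF sd] q(2)])
    show "coeff (weight_enum (6*m) D) i = coeff q i" if "i < 2*m + 1" for i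
      using that gap coeff_one_mod_9(1)[OF q(1)] weight_count_extremal_low[OF assms(2), of i]
      by (simp add: coeff_weight_enum[OF fin])
  qed simp
  show ?thesis
  proof (intro allI impI)
    fix i assume "m + 1 \<le> i \<and> i \<le> 3 * m"
    then obtain z where "coeff q (2*i) = 9 * of_int z"
      using coeff_one_mod_9(2)[OF q(1), of "2*i"] by auto
    then have "int (weight_count (6*m) D (2*i)) = 9 * z"
      using W coeff_weight_enum[OF fin] by (metis of_int_eq_iff of_int_mult of_int_of_nat_eq of_int_numeral)
    then show "weight_count (6 * m) D (2 * i) mod 9 = 0"
      by presburger
  qed
qed

end
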